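(* Let $\alpha>1$, $\delta\in(0,\alpha-1)$, $\tau\in(0,\alpha-1-\delta]$, $d\in\mathbb N$, $1\ge\gamma_1\ge\dots\ge\gamma_d>0$, and $g\in\mathcal A_{\alpha,\boldsymbol\gamma,d}$. Let $\boldsymbol x_1,\dots,\boldsymbol x_N\in[0,1]^d$, $c_1,\dots,c_N\in\mathbb R$. Let $L$ be a prime and $\mathcal Z=\{\boldsymbol z_0,\dots,\boldsymbol z_{L-1}\}$ a rank-1 lattice point set of size $L$ satisfying $e(H_{\beta,\boldsymbol\gamma,d},\mathcal Z)\le C_{\boldsymbol\gamma,d}(\beta,\tau')L^{-\beta+\tau'}$ for all $\tau'\in(0,\beta-\frac12]$, where $\beta=\alpha-\frac12-\delta$. Then for $\nu>1$, with $K=R^\alpha_{\nu,\boldsymbol\gamma,d}$, $$\Big|\frac1N\sum_{n=1}^Nc_ng(\boldsymbol x_n)-\frac1L\sum_{\ell=0}^{L-1}g(\boldsymbol z_\ell)\phi_K(\boldsymbol z_\ell)\Big|\le\mathrm{err}_1(g,\mathcal C)+\mathrm{err}_2(g,\mathcal C)\le\|g\|_{\mathcal A_{\alpha,\boldsymbol\gamma,d}}\Big[\frac1{\sqrt\nu}+\frac{\nu^{d/2}}{L^{\alpha-\frac12-\delta-\tau}}c_{\alpha,\boldsymbol\gamma,d}\,\zeta_{\delta,d}\,C_{\boldsymbol\gamma,d}\big(\alpha-\tfrac12-\delta,\tau\big)\Big]\overline\mu_N.$$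
   Context: $r_\beta(\gamma,h)=\max(|h|^{2\beta}/\gamma,1)$, $r_\beta(\boldsymbol\gamma,\boldsymbol k)=\prod_jr_\beta(\gamma_j,k_j)$; $\omega_{\boldsymbol k}(\boldsymbol x)=\exp(2\pi i\,\boldsymbol k\cdot\boldsymbol x)$, $\widehat f_{\boldsymbol k}=\int_{[0,1]^d}f\,\overline{\omega_{\boldsymbol k}}$. $\mathcal A_{\alpha,\boldsymbol\gamma,d}=\{f\in L_1([0,1]^d):\|f\|_{\mathcal A_{\alpha,\boldsymbol\gamma,d}}=\sum_{\boldsymbol k}\sqrt{r_\alpha(\boldsymbol\gamma,\boldsymbol k)}|\widehat f_{\boldsymbol k}|<\infty\}$; $H_{\beta,\boldsymbol\gamma,d}=\{f\in L_2:\|f\|^2_{H_{\beta,\boldsymbol\gamma,d}}=\sum_{\boldsymbol k}r_\beta(\boldsymbol\gamma,\boldsymbol k)|\widehat f_{\boldsymbol k}|^2<\infty\}$. Weighted $d$-dimensional rectangle: $R^\alpha_{\nu,\boldsymbol\gamma,d}=\{\boldsymbol k\in\mathbb Z^d:\max_{j}r_\alpha(\gamma_j,k_j)\le\nu\}$. $\phi_K(\boldsymbol x)=\sum_{\boldsymbol k\in K}\check\phi_{\boldsymbol k}\overline{\omega_{\boldsymbol k}(\boldsymbol x)}$, $\check\phi_{\boldsymbol k}=\frac1N\sum_nc_n\omega_{\boldsymbol k}(\boldsymbol x_n)$; $\mathcal C=(c_n)$; $\mathrm{err}_1(g,\mathcal C)=|\frac1N\sum_nc_ng(\boldsymbol x_n)-\int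 g\phi_K|$, $\mathrm{err}_2(g,\mathcal C)=|\int g\phi_K-\frac1L\sum_\ell(g\phi_K)(\boldsymbol z_\ell)|$. Rank-1 lattice of size $L$: $\{\boldsymbol z_\ell=(\ell\mathfrak g/L)\bmod1\}$, $\mathfrak g\in\{1,\dots,L-1\}^d$. $e(H_{\beta,\boldsymbol\gamma,d},\mathcal Z)=\sup_{\|f\|\le1}|\int f-\frac1L\sum_\ell f(\boldsymbol z_\ell)|$. $C_{\boldsymbol\gamma,d}(\beta,\tau)=2^{\beta-\tau}\prod_j[1+2\gamma_j^{1/(2(\beta-\tau))}\zeta(\frac\beta{\beta-\tau})]^{\beta-\tau}$; $\overline\mu_N=\frac1N\sum_n|c_n|$; $c_{\alpha,\boldsymbol\gamma,d}=\sqrt{\prod_j\max(1,2^{2\alpha}\gamma_j)}$; $\zeta_{\delta,d}=[1+2\zeta(1+2\delta)]^{d/2}$; $\zeta$ Riemann zeta. *)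

theory Defs
  imports "HOL-Analysis.Analysis"
begin

text \<open>Dimension d = CARD('d); index type 'd is finite and linearly ordered
  (the order is used to state the monotonicity of the weights).\<close>

definition rw :: "real \<Rightarrow> real \<Rightarrow> int \<Rightarrow> real" where
  "rw \<beta> \<gamma> h = max (\<bar>real_of_int h\<bar> powr (2 * \<beta>) / \<gamma>) 1"

definition rvec :: "real \<Rightarrow> real^'d \<Rightarrow> int^'d \<Rightarrow> real" where
  "rvec \<beta> \<gamma> k = (\<Prod>j\<in>UNIV. rw \<beta> (\<gamma> $ j) (k $ j))"

definition omega :: "int^'d \<Rightarrow> real^'d \<Rightarrow> complex" where
  "omega k x = exp (2 * of_real pi * \<i> * of_real (\<Sum>j\<in>UNIV. real_of_int (k $ j) * x $ j))"

definition unit_cube :: "(real^'d) set" where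
  "unit_cube = cbox 0 One"

definition cube_integral :: "(real^'d \<Rightarrow> complex) \<Rightarrow> complex" where
  "cube_integral f = integral\<^sup>L (lebesgue_on unit_cube) f"

definition fourier_coeff :: "(real^'d \<Rightarrow> complex) \<Rightarrow> int^'d \<Rightarrow> complex" where
  "fourier_coeff f k = cube_integral (\<lambda>x. f x * cnj (omega k x))"

text \<open>Weighted Wiener-type space A: L1 function with finite weighted
  l1-norm of Fourier coefficients; as usual it is identified with (the
  continuous representative given by) its absolutely convergent Fourier series.\<close>

definition A_norm :: "real \<Rightarrow> real^'d \<Rightarrow> (real^'d \<Rightarrow> complex) \<Rightarrow> real" where
  "A_norm \<alpha> \<gamma> f = (\<Sum>\<^sub>\<infinity>k\<in>UNIV. sqrt (rvec \<alpha> \<gamma> k) * norm (fourier_coeff f k))"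

definition in_A :: "real \<Rightarrow> real^'d \<Rightarrow> (real^'d \<Rightarrow> complex) \<Rightarrow> bool" where
  "in_A \<alpha> \<gamma> f \<longleftrightarrow>
     integrable (lebesgue_on unit_cube) f \<and>
     (\<lambda>k. sqrt (rvec \<alpha> \<gamma> k) * norm (fourier_coeff f k)) summable_on UNIV \<and>
     (\<forall>x\<in>unit_cube. f x = (\<Sum>\<^sub>\<infinity>k\<in>UNIV. fourier_coeff f k * omega k x))"

text \<open>Weighted Korobov space H (squared norm), identified likewise with the
  Fourier series.\<close>

definition H_norm_sq :: "real \<Rightarrow> real^'d \<Rightarrow> (real^'d \<Rightarrow> complex) \<Rightarrow> real" where
  "H_norm_sq \<beta> \<gamma> f = (\<Sum>\<^sub>\<infinity>k\<in>UNIV. rvec \<beta> \<gamma> k * (norm (fourier_coeff f k))\<^sup>2)"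

definition in_H :: "real \<Rightarrow> real^'d \<Rightarrow> (real^'d \<Rightarrow> complex) \<Rightarrow> bool" where
  "in_H \<beta> \<gamma> f \<longleftrightarrow>
     f \<in> borel_measurable (lebesgue_on unit_cube) \<and>
     integrable (lebesgue_on unit_cube) (\<lambda>x. (norm (f x))\<^sup>2) \<and>
     (\<lambda>k. rvec \<beta> \<gamma> k * (norm (fourier_coeff f k))\<^sup>2) summable_on UNIV \<and>
     (\<forall>x\<in>unit_cube. f x = (\<Sum>\<^sub>\<infinity>k\<in>UNIV. fourier_coeff f k * omega k x))"

definition wce :: "real \<Rightarrow> real^'d \<Rightarrow> nat \<Rightarrow> (nat \<Rightarrow> real^'d) \<Rightarrow> ereal" where
  "wce \<beta> \<gamma> L z = (SUP f\<in>{f. in_H \<beta> \<gamma> f \<and> H_norm_sq \<beta> \<gamma> f \<le> 1}.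
      ereal (norm (cube_integral f - (1 / of_nat L) * (\<Sum>l<L. f (z l)))))"

definition lattice_pt :: "nat \<Rightarrow> nat^'d \<Rightarrow> nat \<Rightarrow> real^'d" where
  "lattice_pt L gv l = (\<chi> j. frac (real l * real (gv $ j) / real L))"

definition rzeta :: "real \<Rightarrow> real" where
  "rzeta s = (\<Sum>n. 1 / real (Suc n) powr s)"

definition Cconst :: "real^'d \<Rightarrow> real \<Rightarrow> real \<Rightarrow> real" where
  "Cconst \<gamma> \<beta> \<tau> = 2 powr (\<beta> - \<tau>) *
     (\<Prod>j\<in>UNIV. (1 + 2 * (\<gamma> $ j) powr (1 / (2 * (\<beta> - \<tau>))) * rzeta (\<beta> / (\<beta> - \<tau>))) powr (\<beta> - \<tau>))"

definition mubar :: "nat \<Rightarrow> (nat \<Rightarrow> real) \<Rightarrow> real" where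
  "mubar N c = (1 / real N) * (\<Sum>n=1..N. \<bar>c n\<bar>)"

definition cconst :: "real \<Rightarrow> real^'d \<Rightarrow> real" where
  "cconst \<alpha> \<gamma> = sqrt (\<Prod>j\<in>UNIV. max 1 (2 powr (2 * \<alpha>) * \<gamma> $ j))"

definition zeta_dd :: "real \<Rightarrow> nat \<Rightarrow> real" where
  "zeta_dd \<delta> d = (1 + 2 * rzeta (1 + 2 * \<delta>)) powr (real d / 2)"

definition Rect :: "real \<Rightarrow> real \<Rightarrow> real^'d \<Rightarrow> (int^'d) set" where
  "Rect \<alpha> \<nu> \<gamma> = {k. (MAX j. rw \<alpha> (\<gamma> $ j) (k $ j)) \<le> \<nu>}"

definition phi_check :: "nat \<Rightarrow> (nat \<Rightarrow> real) \<Rightarrow> (nat \<Rightarrow> real^'d) \<Rightarrow> int^'d \<Rightarrow> complex" where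
  "phi_check N c x k = (1 / of_nat N) * (\<Sum>n=1..N. of_real (c n) * omega k (x n))"

definition phiK :: "(int^'d) set \<Rightarrow> nat \<Rightarrow> (nat \<Rightarrow> real) \<Rightarrow> (nat \<Rightarrow> real^'d) \<Rightarrow> real^'d \<Rightarrow> complex" where
  "phiK K N c x y = (\<Sum>k\<in>K. phi_check N c x k * cnj (omega k y))"

definition err1 :: "(real^'d \<Rightarrow> real) \<Rightarrow> (int^'d) set \<Rightarrow> nat \<Rightarrow> (nat \<Rightarrow> real) \<Rightarrow> (nat \<Rightarrow> real^'d) \<Rightarrow> real" where
  "err1 g K N c x = norm ((1 / of_nat N) * (\<Sum>n=1..N. of_real (c n * g (x n)))
      - cube_integral (\<lambda>y. of_real (g y) * phiK K N c x y))"

definition err2 :: "(real^'d \<Rightarrow> real) \<Rightarrow> (int^'d) set \<Rightarrow> nat \<Rightarrow> (nat \<Rightarrow> real) \<Rightarrow> (nat \<Rightarrow> real^'d)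
      \<Rightarrow> nat \<Rightarrow> (nat \<Rightarrow> real^'d) \<Rightarrow> real" where
  "err2 g K N c x L z = norm (cube_integral (\<lambda>y. of_real (g y) * phiK K N c x y)
      - (1 / of_nat L) * (\<Sum>l<L. of_real (g (z l)) * phiK K N c x (z l)))"

end

theory Submission
  imports Defs
begin

(* Let phi_check_k be the coefficients of phi_K; each is bounded by mubar_N.  Inserting the
   absolutely convergent Fourier series of g, the weighted sum (1/N) sum_n c_n g(x_n) equals
   sum_k ghat_k phi_check_k, while the integral of g phi_K is the same sum restricted to K.
   So err1 is the tail over k outside K, where r_alpha(k) > nu, and it is at most
   ||g||_A mubar_N / sqrt nu.
   For err2, g phi_K has the coefficients sum_{h in K} phi_check_h ghat_{k+h}.  The Peetre-type
   inequality r_beta(k) <= c^2 r_beta(k+h) r_beta(h) and Cauchy-Schwarz bound its Korobov norm by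
   mubar_N c ||g||_A (sum_{h in K} r_beta(h))^(1/2); on the rectangle
   r_beta(h_j) <= nu |h_j|^-(1+2 delta) in each coordinate, so this sum is at most
   (nu (1 + 2 zeta(1+2 delta)))^d.  The assumed worst-case error of the lattice rule in
   H_beta, with beta = alpha - 1/2 - delta, turns this norm bound into the bound on err2. *)

section \<open>Characters and weights\<close>

lemma omega_add: "omega (h + k) y = omega h y * omega k y"
  unfolding omega_def
  by (simp add: distrib_right sum.distrib distrib_left flip: exp_add)

lemma cnj_omega: "cnj (omega h y) = omega (-h) y"
  unfolding omega_def exp_cnj by (simp add: sum_negf)

lemma norm_omega [simp]: "norm (omega k y) = 1"
proof -
  have "omega k y = exp (\<i> * complex_of_real (2 * pi * (\<Sum>j\<in>UNIV. real_of_int (k $ j) * y $ j)))"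
    unfolding omega_def by (simp add: mult_ac)
  then show ?thesis by (simp only: norm_exp_i_times)
qed

lemma omega_0 [simp]: "omega 0 y = 1"
  unfolding omega_def by simp

lemma continuous_on_omega: "continuous_on S (omega k)"
  unfolding omega_def by (intro continuous_intros)

lemma rw_ge_1: "rw \<beta> \<gamma> h \<ge> 1"
  unfolding rw_def by simp

lemma rw_nonneg: "0 \<le> rw \<beta> \<gamma> h"
  using rw_ge_1[of \<beta> \<gamma> h] by linarith

lemma rw_0 [simp]: "rw \<beta> \<gamma> 0 = 1"
  unfolding rw_def by simp

lemma rvec_ge_1: "rvec \<beta> \<gamma> k \<ge> 1"
  unfolding rvec_def by (intro prod_ge_1) (auto simp: rw_ge_1)

lemma rvec_nonneg: "0 \<le> rvec \<beta> \<gamma> k"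
  using rvec_ge_1[of \<beta> \<gamma> k] by linarith

lemma rw_eq_powr:
  assumes "n \<noteq> 0" "0 \<le> \<beta>" "0 < \<gamma>" "\<gamma> \<le> 1"
  shows "rw \<beta> \<gamma> n = \<bar>real_of_int n\<bar> powr (2 * \<beta>) / \<gamma>"
proof -
  have "1 \<le> \<bar>real_of_int n\<bar> powr (2 * \<beta>)"
    using assms by (intro ge_one_powr_ge_zero) auto
  then show ?thesis unfolding rw_def using assms by (simp add: le_divide_eq)
qed

lemma rw_mono_exponent:
  assumes "0 \<le> \<beta>" "\<beta> \<le> \<alpha>" "0 < \<gamma>"
  shows "rw \<beta> \<gamma> n \<le> rw \<alpha> \<gamma> n"
proof (cases "n = 0")
  case False
  then have "\<bar>real_of_int n\<bar> powr (2 * \<beta>) \<le> \<bar>real_of_int n\<bar> powr (2 * \<alpha>)"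
    using assms by (intro powr_mono) auto
  then show ?thesis unfolding rw_def using assms by (intro max.mono divide_right_mono) auto
qed simp

lemma rw_eq_powr_mult_rw:
  assumes "n \<noteq> 0" "0 \<le> \<beta>" "\<beta> \<le> \<alpha>" "0 < \<gamma>" "\<gamma> \<le> 1"
  shows "rw \<beta> \<gamma> n = \<bar>real_of_int n\<bar> powr (2 * \<beta> - 2 * \<alpha>) * rw \<alpha> \<gamma> n"
  using assms by (simp add: rw_eq_powr powr_diff)

text \<open>A Peetre-type inequality; it rests on \<open>\<bar>m - h\<bar> \<le> 2 max \<bar>m\<bar> \<bar>h\<bar>\<close> and on
  \<open>rw \<beta> \<gamma> h \<ge> 1/\<gamma>\<close> for \<open>h \<noteq> 0\<close>.\<close>

lemma rw_diff_le:
  assumes "0 < \<gamma>" "\<gamma> \<le> 1" "0 \<le> \<beta>"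
  shows "rw \<beta> \<gamma> (m - h) \<le> max 1 (2 powr (2 * \<beta>) * \<gamma>) * rw \<beta> \<gamma> m * rw \<beta> \<gamma> h"
proof -
  define C where "C = max 1 (2 powr (2 * \<beta>) * \<gamma>)"
  have C_ge_1: "1 \<le> C" unfolding C_def by simp
  have dominant: "rw \<beta> \<gamma> (m - h) \<le> C * rw \<beta> \<gamma> m * rw \<beta> \<gamma> h" if "\<bar>h\<bar> \<le> \<bar>m\<bar>" for m h
  proof (cases "h = 0")
    case True
    then show ?thesis using mult_right_mono[OF C_ge_1 rw_nonneg[of \<beta> \<gamma> m]] by simp
  next
    case False
    have "\<bar>real_of_int (m - h)\<bar> \<le> 2 * \<bar>real_of_int m\<bar>" using that by linarith
    then have "\<bar>real_of_int (m - h)\<bar> powr (2 * \<beta>) \<le> (2 * \<bar>real_of_int m\<bar>) powr (2 * \<beta>)"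
      using assms by (intro powr_mono2) auto
    then have "\<bar>real_of_int (m - h)\<bar> powr (2 * \<beta>) / \<gamma>
        \<le> (2 powr (2 * \<beta>) * \<gamma>) * (\<bar>real_of_int m\<bar> powr (2 * \<beta>) / \<gamma>) * (1 / \<gamma>)"
      using assms by (simp add: divide_right_mono powr_mult)
    also have "\<dots> \<le> C * rw \<beta> \<gamma> m * rw \<beta> \<gamma> h"
      using assms rw_eq_powr[OF False, of \<beta> \<gamma>]
        ge_one_powr_ge_zero[of "\<bar>real_of_int h\<bar>" "2 * \<beta>"] False
      by (intro mult_mono) (auto simp: C_def rw_def divide_right_mono)
    finally show ?thesis
      using mult_ge1_I[OF mult_ge1_I[OF C_ge_1 rw_ge_1] rw_ge_1] by (simp add: rw_def)
  qed
  have symm: "rw \<beta> \<gamma> (h - m) = rw \<beta> \<gamma> (m - h)"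
    unfolding rw_def by (simp add: abs_minus_commute)
  consider "\<bar>h\<bar> \<le> \<bar>m\<bar>" | "\<bar>m\<bar> \<le> \<bar>h\<bar>" by linarith
  then show ?thesis
  proof cases
    case 1
    show ?thesis using dominant[OF 1] unfolding C_def .
  next
    case 2
    show ?thesis using dominant[OF 2] unfolding symm C_def by (simp add: mult_ac)
  qed
qed

lemma prod_max_1_powr_sq_cconst:
  "(\<Prod>j\<in>UNIV. max 1 (2 powr (2 * \<alpha>) * \<gamma> $ j)) = (cconst \<alpha> \<gamma>)\<^sup>2"
  unfolding cconst_def by (rule real_sqrt_pow2[symmetric]) (auto intro: prod_nonneg)

lemma cconst_nonneg: "0 \<le> cconst \<alpha> \<gamma>"
  unfolding cconst_def by (auto intro!: prod_nonneg)

lemma rvec_diff_le: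
  fixes \<gamma> :: "real^'d::finite"
  assumes "\<forall>j. 0 < \<gamma> $ j \<and> \<gamma> $ j \<le> 1" "0 \<le> \<beta>" "\<beta> \<le> \<alpha>"
  shows "rvec \<beta> \<gamma> (m - h) \<le> (cconst \<alpha> \<gamma>)\<^sup>2 * rvec \<beta> \<gamma> m * rvec \<beta> \<gamma> h"
proof -
  have "rvec \<beta> \<gamma> (m - h)
      \<le> (\<Prod>j\<in>UNIV. max 1 (2 powr (2 * \<alpha>) * \<gamma> $ j) * rw \<beta> (\<gamma> $ j) (m $ j) * rw \<beta> (\<gamma> $ j) (h $ j))"
    unfolding rvec_def
  proof (intro prod_mono conjI rw_nonneg)
    fix j
    have "rw \<beta> (\<gamma> $ j) (m $ j - h $ j)
        \<le> max 1 (2 powr (2 * \<beta>) * \<gamma> $ j) * rw \<beta> (\<gamma> $ j) (m $ j) * rw \<beta> (\<gamma> $ j) (h $ j)"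
      using assms by (intro rw_diff_le) auto
    also have "\<dots> \<le> max 1 (2 powr (2 * \<alpha>) * \<gamma> $ j) * rw \<beta> (\<gamma> $ j) (m $ j) * rw \<beta> (\<gamma> $ j) (h $ j)"
      using assms by (intro mult_right_mono max.mono) (auto simp: rw_nonneg less_imp_le)
    finally show "rw \<beta> (\<gamma> $ j) ((m - h) $ j)
        \<le> max 1 (2 powr (2 * \<alpha>) * \<gamma> $ j) * rw \<beta> (\<gamma> $ j) (m $ j) * rw \<beta> (\<gamma> $ j) (h $ j)"
      by simp
  qed
  also have "\<dots> = (cconst \<alpha> \<gamma>)\<^sup>2 * rvec \<beta> \<gamma> m * rvec \<beta> \<gamma> h"
    unfolding prod_max_1_powr_sq_cconst[symmetric] rvec_def by (simp add: prod.distrib)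
  finally show ?thesis .
qed

lemma rvec_mono_exponent:
  fixes \<gamma> :: "real^'d::finite"
  assumes "\<forall>j. 0 < \<gamma> $ j" "0 \<le> \<beta>" "\<beta> \<le> \<alpha>"
  shows "rvec \<beta> \<gamma> k \<le> rvec \<alpha> \<gamma> k"
  unfolding rvec_def using assms by (intro prod_mono conjI rw_mono_exponent rw_nonneg) auto

section \<open>The weighted rectangle\<close>

lemma mem_Rect_iff:
  fixes \<gamma> :: "real^'d::finite"
  shows "k \<in> Rect \<alpha> \<nu> \<gamma> \<longleftrightarrow> (\<forall>j. rw \<alpha> (\<gamma> $ j) (k $ j) \<le> \<nu>)"
  unfolding Rect_def by (subst Max_le_iff) auto

lemma rvec_gt_if_notin_Rect:
  fixes \<gamma> :: "real^'d::finite"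
  assumes "k \<notin> Rect \<alpha> \<nu> \<gamma>"
  shows "\<nu> < rvec \<alpha> \<gamma> k"
proof -
  obtain j where j: "\<nu> < rw \<alpha> (\<gamma> $ j) (k $ j)"
    using assms unfolding mem_Rect_iff by (auto simp: not_le)
  have "rvec \<alpha> \<gamma> k = rw \<alpha> (\<gamma> $ j) (k $ j) * (\<Prod>i\<in>UNIV - {j}. rw \<alpha> (\<gamma> $ i) (k $ i))"
    unfolding rvec_def by (subst prod.remove[of _ j]) auto
  also have "\<dots> \<ge> rw \<alpha> (\<gamma> $ j) (k $ j) * 1"
    by (intro mult_left_mono prod_ge_1 rw_ge_1 rw_nonneg)
  finally show ?thesis using j by simp
qed

definition int_box :: "int set \<Rightarrow> (int^'d) set" where
  "int_box S = {k. \<forall>j. k $ j \<in> S}"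

lemma int_box_eq_image_PiE: "int_box S = vec_lambda ` PiE UNIV (\<lambda>_. S)"
proof -
  have "k \<in> vec_lambda ` PiE UNIV (\<lambda>_. S)" if "\<forall>j. k $ j \<in> S" for k :: "int^'d"
    using that by (intro image_eqI[of _ _ "\<lambda>j. k $ j"]) auto
  then show ?thesis unfolding int_box_def by auto
qed

lemma finite_int_box: "finite S \<Longrightarrow> finite (int_box S :: (int^'d::finite) set)"
  unfolding int_box_eq_image_PiE by (intro finite_imageI finite_PiE) auto

lemma sum_prod_int_box:
  assumes "finite S"
  shows "(\<Sum>k\<in>(int_box S :: (int^'d::finite) set). \<Prod>j\<in>UNIV. f j (k $ j))
       = (\<Prod>j\<in>UNIV. \<Sum>n\<in>S. (f j n :: real))"
proof -
  have "inj_on vec_lambda (PiE (UNIV :: 'd set) (\<lambda>_. S))"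
    by (intro inj_onI) (metis vec_lambda_inverse UNIV_I)
  then have "(\<Sum>k\<in>(int_box S :: (int^'d) set). \<Prod>j\<in>UNIV. f j (k $ j))
      = (\<Sum>p\<in>PiE UNIV (\<lambda>_. S). \<Prod>j\<in>UNIV. f j (p j))"
    unfolding int_box_eq_image_PiE by (subst sum.reindex) auto
  also have "\<dots> = (\<Prod>j\<in>UNIV. \<Sum>n\<in>S. f j n)"
    using assms by (intro prod_sum_PiE[symmetric]) auto
  finally show ?thesis .
qed

lemma Rect_subset_int_box:
  fixes \<gamma> :: "real^'d::finite"
  assumes "\<forall>j. 0 < \<gamma> $ j \<and> \<gamma> $ j \<le> 1" "1/2 \<le> \<alpha>"
  shows "Rect \<alpha> \<nu> \<gamma> \<subseteq> int_box {-\<lceil>\<nu>\<rceil>..\<lceil>\<nu>\<rceil>}"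
proof
  fix k assume "k \<in> Rect \<alpha> \<nu> \<gamma>"
  then have le_nu: "rw \<alpha> (\<gamma> $ j) (k $ j) \<le> \<nu>" for j unfolding mem_Rect_iff by auto
  have abs_le_nu: "\<bar>real_of_int (k $ j)\<bar> \<le> \<nu>" for j
  proof (cases "k $ j = 0")
    case True
    then show ?thesis using le_nu[of j] by simp
  next
    case False
    then have "\<bar>real_of_int (k $ j)\<bar> \<ge> 1" by linarith
    then have "\<bar>real_of_int (k $ j)\<bar> \<le> \<bar>real_of_int (k $ j)\<bar> powr (2 * \<alpha>)"
      using assms powr_mono[of 1 "2 * \<alpha>" "\<bar>real_of_int (k $ j)\<bar>"] by simp
    also have "\<dots> = rw \<alpha> (\<gamma> $ j) (k $ j) * \<gamma> $ j"
      using assms(1)[rule_format, of j] assms(2) False by (simp add: rw_eq_powr)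
    also have "\<dots> \<le> \<nu>"
      using assms le_nu[of j] rw_nonneg[of \<alpha> "\<gamma> $ j" "k $ j"]
      by (metis mult_left_le order_trans)
    finally show ?thesis .
  qed
  have "real_of_int \<bar>k $ j\<bar> \<le> of_int \<lceil>\<nu>\<rceil>" for j
    using order_trans[OF abs_le_nu[of j] le_of_int_ceiling] by simp
  then have "\<bar>k $ j\<bar> \<le> \<lceil>\<nu>\<rceil>" for j
    by (simp only: of_int_le_iff)
  then show "k \<in> int_box {-\<lceil>\<nu>\<rceil>..\<lceil>\<nu>\<rceil>}"
    unfolding int_box_def by (auto simp: abs_le_iff minus_le_iff)
qed

lemma finite_Rect:
  fixes \<gamma> :: "real^'d::finite"
  assumes "\<forall>j. 0 < \<gamma> $ j \<and> \<gamma> $ j \<le> 1" "1/2 \<le> \<alpha>"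
  shows "finite (Rect \<alpha> \<nu> \<gamma>)"
  using finite_subset[OF Rect_subset_int_box[OF assms] finite_int_box] by auto

text \<open>Summed over all of \<open>\<int>\<close>, \<open>zeta_weight s\<close> gives \<open>1 + 2 \<zeta>(s)\<close>: this is the source of the
  factor \<open>zeta_dd\<close>.\<close>

definition zeta_weight :: "real \<Rightarrow> int \<Rightarrow> real" where
  "zeta_weight s n = (if n = 0 then 1 else \<bar>real_of_int n\<bar> powr (- s))"

lemma zeta_weight_nonneg: "0 \<le> zeta_weight s n"
  unfolding zeta_weight_def by auto

lemma sum_zeta_weight_symmetric_interval:
  "(\<Sum>n\<in>{-int M..int M}. zeta_weight s n) = 1 + 2 * (\<Sum>i<M. 1 / real (Suc i) powr s)"
proof (induction M)
  case 0
  then show ?case by (simp add: zeta_weight_def)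
next
  case (Suc M)
  have "{-int (Suc M)..int (Suc M)} = insert (int (Suc M)) (insert (- int (Suc M)) {-int M..int M})"
    by auto
  moreover have "zeta_weight s (int (Suc M)) = 1 / real (Suc M) powr s"
    and "zeta_weight s (- int (Suc M)) = 1 / real (Suc M) powr s"
    unfolding zeta_weight_def by (simp_all add: powr_minus_divide add.commute)
  ultimately show ?case using Suc by simp
qed

lemma summable_zeta:
  assumes "1 < s"
  shows "summable (\<lambda>n. 1 / real (Suc n) powr s)"
proof -
  have "summable (\<lambda>n. real n powr (- s))"
    using assms by (subst summable_real_powr_iff) auto
  then have "summable (\<lambda>n. real (Suc n) powr (- s))"
    by (subst summable_Suc_iff)
  then show ?thesis by (simp add: powr_minus_divide)
qed

lemma rzeta_nonneg: "1 < s \<Longrightarrow> 0 \<le> rzeta s"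
  unfolding rzeta_def by (intro suminf_nonneg summable_zeta) auto

lemma sum_zeta_weight_le:
  assumes "finite S" "1 < s"
  shows "(\<Sum>n\<in>S. zeta_weight s n) \<le> 1 + 2 * rzeta s"
proof -
  define M where "M = nat (\<Sum>n\<in>S. \<bar>n\<bar>)"
  have "\<bar>n\<bar> \<le> (\<Sum>n\<in>S. \<bar>n\<bar>)" if "n \<in> S" for n
    using assms(1) that by (intro member_le_sum) auto
  then have "S \<subseteq> {-int M..int M}"
    unfolding M_def by fastforce
  then have "(\<Sum>n\<in>S. zeta_weight s n) \<le> (\<Sum>n\<in>{-int M..int M}. zeta_weight s n)"
    by (intro sum_mono2) (auto simp: zeta_weight_nonneg)
  also have "\<dots> = 1 + 2 * (\<Sum>i<M. 1 / real (Suc i) powr s)"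
    by (rule sum_zeta_weight_symmetric_interval)
  also have "\<dots> \<le> 1 + 2 * rzeta s"
    unfolding rzeta_def using summable_zeta[OF assms(2)]
    by (intro add_left_mono mult_left_mono sum_le_suminf) auto
  finally show ?thesis .
qed

lemma rw_le_zeta_weight:
  assumes "0 < \<gamma>" "\<gamma> \<le> 1" "0 \<le> \<beta>" "\<beta> \<le> \<alpha>" "rw \<alpha> \<gamma> n \<le> \<nu>" "1 \<le> \<nu>"
  shows "rw \<beta> \<gamma> n \<le> \<nu> * zeta_weight (2 * (\<alpha> - \<beta>)) n"
proof (cases "n = 0")
  case False
  have "rw \<beta> \<gamma> n = \<bar>real_of_int n\<bar> powr (- (2 * (\<alpha> - \<beta>))) * rw \<alpha> \<gamma> n"
    using assms False by (simp add: rw_eq_powr_mult_rw)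
  also have "\<dots> \<le> \<bar>real_of_int n\<bar> powr (- (2 * (\<alpha> - \<beta>))) * \<nu>"
    using assms by (intro mult_left_mono) auto
  finally show ?thesis using False by (simp add: zeta_weight_def mult.commute)
qed (use assms in \<open>simp add: zeta_weight_def\<close>)

lemma sum_rvec_Rect_le:
  fixes \<gamma> :: "real^'d::finite"
  assumes "\<forall>j. 0 < \<gamma> $ j \<and> \<gamma> $ j \<le> 1" "0 \<le> \<beta>" "\<beta> < \<alpha> - 1/2" "1 \<le> \<nu>"
  shows "(\<Sum>h\<in>Rect \<alpha> \<nu> \<gamma>. rvec \<beta> \<gamma> h) \<le> (\<nu> * (1 + 2 * rzeta (2 * (\<alpha> - \<beta>)))) ^ CARD('d)"
proof -
  define S where "S = {-\<lceil>\<nu>\<rceil>..\<lceil>\<nu>\<rceil>}"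
  define w where "w = zeta_weight (2 * (\<alpha> - \<beta>))"
  have "(\<Sum>h\<in>Rect \<alpha> \<nu> \<gamma>. rvec \<beta> \<gamma> h) \<le> (\<Sum>h\<in>Rect \<alpha> \<nu> \<gamma>. \<Prod>j\<in>UNIV. \<nu> * w (h $ j))"
    unfolding rvec_def w_def
    using assms by (intro sum_mono prod_mono conjI rw_nonneg rw_le_zeta_weight) (auto simp: mem_Rect_iff)
  also have "\<dots> \<le> (\<Sum>h\<in>(int_box S :: (int^'d) set). \<Prod>j\<in>UNIV. \<nu> * w (h $ j))"
    using assms Rect_subset_int_box[of \<gamma> \<alpha> \<nu>] unfolding S_def w_def
    by (intro sum_mono2 finite_int_box prod_nonneg) (auto simp: zeta_weight_nonneg)
  also have "\<dots> = (\<Prod>j\<in>(UNIV :: 'd set). \<Sum>n\<in>S. \<nu> * w n)"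
    by (rule sum_prod_int_box) (simp add: S_def)
  also have "\<dots> = (\<Prod>j\<in>(UNIV :: 'd set). \<nu> * (\<Sum>n\<in>S. w n))"
    by (simp add: sum_distrib_left)
  also have "\<dots> \<le> (\<Prod>j\<in>(UNIV :: 'd set). \<nu> * (1 + 2 * rzeta (2 * (\<alpha> - \<beta>))))"
    using assms unfolding S_def w_def
    by (intro prod_mono conjI mult_left_mono sum_zeta_weight_le sum_nonneg mult_nonneg_nonneg)
      (auto simp: zeta_weight_nonneg)
  finally show ?thesis by simp
qed

lemma has_sum_sum:
  fixes f :: "'i \<Rightarrow> 'a \<Rightarrow> 'b::{topological_comm_monoid_add, t2_space}"
  assumes "finite I" "\<And>i. i \<in> I \<Longrightarrow> (f i has_sum s i) A"
  shows "((\<lambda>x. \<Sum>i\<in>I. f i x) has_sum (\<Sum>i\<in>I. s i)) A"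
  using assms by (induction I rule: finite_induct) (auto intro: has_sum_add)

lemma infsum_sum:
  fixes f :: "'i \<Rightarrow> 'a \<Rightarrow> 'b::{topological_comm_monoid_add, t2_space}"
  assumes "finite I" "\<And>i. i \<in> I \<Longrightarrow> f i summable_on A"
  shows "(\<Sum>\<^sub>\<infinity>x\<in>A. \<Sum>i\<in>I. f i x) = (\<Sum>i\<in>I. \<Sum>\<^sub>\<infinity>x\<in>A. f i x)"
  using assms by (intro infsumI has_sum_sum) (auto simp: summable_iff_has_sum_infsum)

lemma bij_betw_add_right: "bij_betw (\<lambda>k. k + h) UNIV (UNIV :: 'a::ab_group_add set)"
  by (rule bij_betwI[where g="\<lambda>k. k - h"]) auto

lemma infsum_shift: "(\<Sum>\<^sub>\<infinity>k::'a::ab_group_add. f (k + h)) = (\<Sum>\<^sub>\<infinity>k. f k)"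
  using infsum_reindex_bij_betw[OF bij_betw_add_right] .

lemma summable_on_shift_iff:
  "(\<lambda>k::'a::ab_group_add. f (k + h)) summable_on UNIV \<longleftrightarrow> f summable_on UNIV"
  using summable_on_reindex_bij_betw[OF bij_betw_add_right] .

lemma sum_shift_le_infsum:
  fixes B :: "'a::ab_group_add \<Rightarrow> real"
  assumes "B summable_on UNIV" "\<And>m. 0 \<le> B m" "finite K"
  shows "(\<Sum>h\<in>K. B (k + h)) \<le> (\<Sum>\<^sub>\<infinity>m. B m)"
proof -
  have "(\<Sum>h\<in>K. B (k + h)) = sum B ((\<lambda>h. k + h) ` K)"
    by (subst sum.reindex) (auto simp: inj_on_def)
  also have "\<dots> \<le> (\<Sum>\<^sub>\<infinity>m. B m)"
    using assms by (intro finite_sum_le_infsum) auto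
  finally show ?thesis .
qed

lemma has_sum_sum_shift:
  fixes B :: "'a::ab_group_add \<Rightarrow> real"
  assumes "B summable_on UNIV" "finite K"
  shows "((\<lambda>k. \<Sum>h\<in>K. r h * B (k + h)) has_sum ((\<Sum>h\<in>K. r h) * (\<Sum>\<^sub>\<infinity>m. B m))) UNIV"
proof -
  have "((\<lambda>k. B (k + h)) has_sum (\<Sum>\<^sub>\<infinity>k. B (k + h))) UNIV" for h
    using assms(1) summable_on_shift_iff[of B h] by (simp add: summable_iff_has_sum_infsum[symmetric])
  then have "((\<lambda>k. B (k + h)) has_sum (\<Sum>\<^sub>\<infinity>m. B m)) UNIV" for h
    by (simp only: infsum_shift)
  then show ?thesis
    unfolding sum_distrib_right using assms(2) by (intro has_sum_sum has_sum_cmult_right)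
qed

section \<open>Fourier coefficients and the kernel \<open>phiK\<close>\<close>

lemma lebesgue_on_unit_cube_finite: "finite_measure (lebesgue_on (unit_cube :: (real^'d::finite) set))"
  unfolding unit_cube_def by (intro finite_measure_lebesgue_on lmeasurable_cbox)

lemma borel_measurable_continuous_on_unit_cube:
  fixes h :: "real^'d::finite \<Rightarrow> 'b::topological_space"
  assumes "continuous_on UNIV h"
  shows "h \<in> borel_measurable (lebesgue_on unit_cube)"
  using assms unfolding unit_cube_def
  by (intro continuous_imp_measurable_on_sets_lebesgue) (auto intro: continuous_on_subset)

lemma integrable_mult_bounded_continuous:
  fixes G :: "real^'d::finite \<Rightarrow> complex"
  assumes "integrable (lebesgue_on unit_cube) G" "continuous_on UNIV h" "\<And>y. norm (h y) \<le> B"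
  shows "integrable (lebesgue_on unit_cube) (\<lambda>y. G y * h y)"
proof (rule Bochner_Integration.integrable_bound)
  show "integrable (lebesgue_on unit_cube) (\<lambda>y. complex_of_real B * G y)"
    using assms(1) by (rule integrable_mult_right)
  show "(\<lambda>y. G y * h y) \<in> borel_measurable (lebesgue_on unit_cube)"
    using assms(1) borel_measurable_continuous_on_unit_cube[OF assms(2)] by measurable
  have "0 \<le> B" using assms(3) norm_ge_zero order_trans by blast
  moreover have "norm (G y) * norm (h y) \<le> B * norm (G y)" for y
    using mult_left_mono[OF assms(3) norm_ge_zero] by (simp add: mult.commute)
  ultimately show "AE y in lebesgue_on unit_cube. norm (G y * h y) \<le> norm (complex_of_real B * G y)"
    by (intro AE_I2) (simp add: norm_mult)
qed

lemma continuous_on_phiK: "continuous_on S (phiK K N c x)"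
  unfolding phiK_def cnj_omega by (intro continuous_intros continuous_on_sum continuous_on_omega)

lemma mubar_nonneg: "0 \<le> mubar N c"
  unfolding mubar_def by (auto intro: sum_nonneg)

lemma norm_phi_check_le: "norm (phi_check N c x k) \<le> mubar N c"
proof -
  have "norm (\<Sum>n=1..N. complex_of_real (c n) * omega k (x n)) \<le> (\<Sum>n=1..N. \<bar>c n\<bar>)"
    by (rule order_trans[OF norm_sum]) (simp add: norm_mult)
  then show ?thesis
    unfolding phi_check_def mubar_def norm_mult by (simp add: divide_right_mono norm_divide)
qed

lemma norm_phiK_le: "norm (phiK K N c x y) \<le> real (card K) * mubar N c"
proof -
  have "norm (phiK K N c x y) \<le> (\<Sum>h\<in>K. mubar N c)"
    unfolding phiK_def
    by (rule order_trans[OF norm_sum sum_mono]) (simp add: norm_mult norm_phi_check_le)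
  then show ?thesis by simp
qed

lemma fourier_coeff_mult_phiK:
  fixes G :: "real^'d::finite \<Rightarrow> complex"
  assumes "integrable (lebesgue_on unit_cube) G"
  shows "fourier_coeff (\<lambda>y. G y * phiK K N c x y) k
         = (\<Sum>h\<in>K. phi_check N c x h * fourier_coeff G (k + h))"
proof -
  have integrand: "G y * phiK K N c x y * cnj (omega k y)
      = (\<Sum>h\<in>K. phi_check N c x h * (G y * cnj (omega (k + h) y)))" for y
    unfolding phiK_def sum_distrib_left sum_distrib_right
    by (intro sum.cong refl) (simp add: omega_add mult_ac)
  have integrable: "integrable (lebesgue_on unit_cube) (\<lambda>y. G y * cnj (omega m y))" for m
    using assms by (rule integrable_mult_bounded_continuous[where B=1])
      (auto simp: cnj_omega intro: continuous_on_omega)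
  show ?thesis
    unfolding fourier_coeff_def cube_integral_def integrand
    by (subst Bochner_Integration.integral_sum) (auto intro: integrable_mult_right integrable)
qed

lemma cube_integral_mult_phiK:
  fixes G :: "real^'d::finite \<Rightarrow> complex"
  assumes "integrable (lebesgue_on unit_cube) G"
  shows "cube_integral (\<lambda>y. G y * phiK K N c x y) = (\<Sum>h\<in>K. phi_check N c x h * fourier_coeff G h)"
  using fourier_coeff_mult_phiK[OF assms, of K N c x 0] by (simp add: fourier_coeff_def)

lemma summable_on_norm_fourier_coeff:
  assumes "in_A \<alpha> \<gamma> G"
  shows "(\<lambda>k. norm (fourier_coeff G k)) summable_on UNIV"
proof (rule summable_on_comparison_test)
  show "(\<lambda>k. sqrt (rvec \<alpha> \<gamma> k) * norm (fourier_coeff G k)) summable_on UNIV"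
    using assms unfolding in_A_def by auto
  show "norm (fourier_coeff G k) \<le> sqrt (rvec \<alpha> \<gamma> k) * norm (fourier_coeff G k)" for k
    using mult_right_mono[of 1 "sqrt (rvec \<alpha> \<gamma> k)" "norm (fourier_coeff G k)"] rvec_ge_1[of \<alpha> \<gamma> k]
    by simp
qed (rule norm_ge_zero)

lemma summable_on_fourier_series:
  assumes "in_A \<alpha> \<gamma> G"
  shows "(\<lambda>k. fourier_coeff G k * omega k y) summable_on UNIV"
proof (rule abs_summable_summable)
  show "(\<lambda>k. norm (fourier_coeff G k * omega k y)) summable_on UNIV"
    using summable_on_norm_fourier_coeff[OF assms] by (simp add: norm_mult)
qed

lemma norm_le_sum_norm_fourier_coeff:
  assumes "in_A \<alpha> \<gamma> G" "y \<in> unit_cube"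
  shows "norm (G y) \<le> (\<Sum>\<^sub>\<infinity>k. norm (fourier_coeff G k))"
proof -
  have "G y = (\<Sum>\<^sub>\<infinity>k. fourier_coeff G k * omega k y)"
    using assms unfolding in_A_def by auto
  also have "norm \<dots> \<le> (\<Sum>\<^sub>\<infinity>k. norm (fourier_coeff G k * omega k y))"
    using summable_on_norm_fourier_coeff[OF assms(1)]
    by (intro norm_infsum_bound) (simp add: norm_mult)
  finally show ?thesis by (simp add: norm_mult)
qed

lemma A_norm_nonneg: "0 \<le> A_norm \<alpha> \<gamma> G"
  unfolding A_norm_def by (intro infsum_nonneg mult_nonneg_nonneg) (auto simp: rvec_nonneg)

section \<open>The truncation error\<close>

lemma weighted_sum_eq_infsum_fourier:
  assumes "in_A \<alpha> \<gamma> G" "\<forall>n\<in>{1..N}. x n \<in> unit_cube"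
  shows "(1 / of_nat N) * (\<Sum>n=1..N. complex_of_real (c n) * G (x n))
       = (\<Sum>\<^sub>\<infinity>k. fourier_coeff G k * phi_check N c x k)"
proof -
  define a where "a = fourier_coeff G"
  have series: "(\<lambda>k. a k * omega k y) summable_on UNIV" for y
    unfolding a_def using assms(1) by (rule summable_on_fourier_series)
  have "(\<Sum>n=1..N. complex_of_real (c n) * G (x n))
      = (\<Sum>n=1..N. \<Sum>\<^sub>\<infinity>k. complex_of_real (c n) * (a k * omega k (x n)))"
    using assms unfolding in_A_def a_def by (intro sum.cong refl) (simp add: infsum_cmult_right')
  also have "\<dots> = (\<Sum>\<^sub>\<infinity>k. \<Sum>n=1..N. complex_of_real (c n) * (a k * omega k (x n)))"
    by (rule infsum_sum[symmetric]) (auto intro: summable_on_cmult_right series)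
  finally show ?thesis
    unfolding phi_check_def a_def
    by (simp add: infsum_cmult_right'[symmetric] sum_distrib_left mult_ac)
qed

lemma infsum_norm_fourier_tail_le:
  assumes "in_A \<alpha> \<gamma> G" "\<And>k. k \<notin> K \<Longrightarrow> \<nu> < rvec \<alpha> \<gamma> k" "0 < \<nu>"
    and "\<And>k. norm (ph k) \<le> \<mu>"
  shows "(\<Sum>\<^sub>\<infinity>k\<in>-K. norm (fourier_coeff G k * ph k)) \<le> A_norm \<alpha> \<gamma> G * (1 / sqrt \<nu>) * \<mu>"
proof -
  define w where "w = (\<lambda>k. sqrt (rvec \<alpha> \<gamma> k) * norm (fourier_coeff G k))"
  have "0 \<le> \<mu>" using assms(4) norm_ge_zero order_trans by blast
  have "w summable_on UNIV" using assms(1) unfolding in_A_def w_def by auto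
  then have bound_summable: "(\<lambda>k. w k * (\<mu> / sqrt \<nu>)) summable_on UNIV"
    by (rule summable_on_cmult_left)
  have bound_nonneg: "0 \<le> w k * (\<mu> / sqrt \<nu>)" for k
    using assms(3) \<open>0 \<le> \<mu>\<close> rvec_nonneg[of \<alpha> \<gamma> k] unfolding w_def
    by (intro mult_nonneg_nonneg divide_nonneg_pos) auto
  have tail_le: "norm (fourier_coeff G k * ph k) \<le> w k * (\<mu> / sqrt \<nu>)" if "k \<in> -K" for k
  proof -
    have "sqrt \<nu> \<le> sqrt (rvec \<alpha> \<gamma> k)" using that assms(2)[of k] by simp
    then have "(sqrt \<nu> * norm (fourier_coeff G k)) * (\<mu> / sqrt \<nu>) \<le> w k * (\<mu> / sqrt \<nu>)"
      unfolding w_def using assms(3) \<open>0 \<le> \<mu>\<close> by (intro mult_right_mono) auto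
    moreover have "norm (fourier_coeff G k * ph k) \<le> norm (fourier_coeff G k) * \<mu>"
      unfolding norm_mult by (intro mult_left_mono assms(4)) auto
    ultimately show ?thesis using assms(3) by simp
  qed
  have bound_summable_tail: "(\<lambda>k. w k * (\<mu> / sqrt \<nu>)) summable_on -K"
    using bound_summable by (rule summable_on_subset_banach) simp
  then have "(\<lambda>k. norm (fourier_coeff G k * ph k)) summable_on -K"
  proof (rule summable_on_comparison_test)
    show "norm (fourier_coeff G k * ph k) \<le> w k * (\<mu> / sqrt \<nu>)" if "k \<in> -K" for k
      using that by (rule tail_le)
  qed simp
  then have "(\<Sum>\<^sub>\<infinity>k\<in>-K. norm (fourier_coeff G k * ph k)) \<le> (\<Sum>\<^sub>\<infinity>k\<in>-K. w k * (\<mu> / sqrt \<nu>))"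
    using bound_summable_tail tail_le by (rule infsum_mono)
  also have "\<dots> \<le> (\<Sum>\<^sub>\<infinity>k. w k * (\<mu> / sqrt \<nu>))"
    using bound_summable bound_nonneg
    by (intro infsum_mono_neutral) (auto intro: summable_on_subset_banach)
  also have "\<dots> = A_norm \<alpha> \<gamma> G * (1 / sqrt \<nu>) * \<mu>"
    unfolding A_norm_def w_def by (subst infsum_cmult_left') simp
  finally show ?thesis .
qed

lemma err1_le:
  fixes g :: "real^'d::finite \<Rightarrow> real" and \<gamma> :: "real^'d"
  assumes "in_A \<alpha> \<gamma> (\<lambda>y. complex_of_real (g y))" "\<forall>n\<in>{1..N}. x n \<in> unit_cube"
    and "finite K" "\<And>k. k \<notin> K \<Longrightarrow> \<nu> < rvec \<alpha> \<gamma> k" "0 < \<nu>"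
  shows "err1 g K N c x \<le> A_norm \<alpha> \<gamma> (\<lambda>y. complex_of_real (g y)) * (1 / sqrt \<nu>) * mubar N c"
proof -
  define G where "G = (\<lambda>y. complex_of_real (g y))"
  define f where "f = (\<lambda>k. fourier_coeff G k * phi_check N c x k)"
  have inA: "in_A \<alpha> \<gamma> G" using assms(1) unfolding G_def .
  have "(\<lambda>k. norm (f k)) summable_on UNIV"
    using summable_on_cmult_left[OF summable_on_norm_fourier_coeff[OF inA], of "mubar N c"]
    by (rule summable_on_comparison_test)
      (auto simp: f_def norm_mult intro: mult_left_mono norm_phi_check_le)
  then have abs_summable_f: "(\<lambda>k. norm (f k)) summable_on B" for B
    by (rule summable_on_subset_banach) simp
  have "(\<Sum>\<^sub>\<infinity>k. f k) = (\<Sum>\<^sub>\<infinity>k\<in>K \<union> -K. f k)"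
    by simp
  also have "\<dots> = (\<Sum>k\<in>K. f k) + (\<Sum>\<^sub>\<infinity>k\<in>-K. f k)"
    using assms(3) abs_summable_f by (subst infsum_Un_disjoint) (auto intro: abs_summable_summable)
  finally have "err1 g K N c x = norm (\<Sum>\<^sub>\<infinity>k\<in>-K. f k)"
    using weighted_sum_eq_infsum_fourier[OF inA assms(2), of c] cube_integral_mult_phiK[of G K N c x]
      inA unfolding err1_def f_def G_def in_A_def by (simp add: mult.commute)
  also have "\<dots> \<le> (\<Sum>\<^sub>\<infinity>k\<in>-K. norm (f k))"
    by (rule norm_infsum_bound) (rule abs_summable_f)
  also have "\<dots> \<le> A_norm \<alpha> \<gamma> G * (1 / sqrt \<nu>) * mubar N c"
    unfolding f_def using inA assms(4,5) norm_phi_check_le by (rule infsum_norm_fourier_tail_le)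
  finally show ?thesis unfolding G_def .
qed

section \<open>The Korobov norm of \<open>g \<cdot> phiK\<close>\<close>

lemma sqrt_rvec_le_shift:
  fixes \<gamma> :: "real^'d::finite"
  assumes "\<forall>j. 0 < \<gamma> $ j \<and> \<gamma> $ j \<le> 1" "0 \<le> \<beta>" "\<beta> \<le> \<alpha>"
  shows "sqrt (rvec \<beta> \<gamma> k) \<le> cconst \<alpha> \<gamma> * sqrt (rvec \<beta> \<gamma> h) * sqrt (rvec \<beta> \<gamma> (k + h))"
proof -
  have "rvec \<beta> \<gamma> ((k + h) - h) \<le> (cconst \<alpha> \<gamma>)\<^sup>2 * rvec \<beta> \<gamma> (k + h) * rvec \<beta> \<gamma> h"
    using assms by (rule rvec_diff_le)
  then have "sqrt (rvec \<beta> \<gamma> k) \<le> sqrt ((cconst \<alpha> \<gamma>)\<^sup>2 * rvec \<beta> \<gamma> (k + h) * rvec \<beta> \<gamma> h)"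
    by simp
  then show ?thesis
    using cconst_nonneg[of \<alpha> \<gamma>] by (simp add: real_sqrt_mult mult_ac)
qed

text \<open>The weight at \<open>k\<close> is moved to \<open>k + h\<close> and \<open>h\<close> by \<open>sqrt_rvec_le_shift\<close>; writing
  \<open>B = sqrt B * sqrt B\<close>, Cauchy-Schwarz then separates the two resulting sums.\<close>

lemma rvec_norm_sum_shift_sq_le:
  fixes a ph :: "int^'d::finite \<Rightarrow> complex" and \<gamma> :: "real^'d"
  assumes "\<forall>j. 0 < \<gamma> $ j \<and> \<gamma> $ j \<le> 1" "0 \<le> \<beta>" "\<beta> \<le> \<alpha>"
    and "\<And>h. norm (ph h) \<le> \<mu>"
  defines "B \<equiv> \<lambda>m. sqrt (rvec \<beta> \<gamma> m) * norm (a m)"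
  shows "rvec \<beta> \<gamma> k * (norm (\<Sum>h\<in>K. ph h * a (k + h)))\<^sup>2
    \<le> \<mu>\<^sup>2 * (cconst \<alpha> \<gamma>)\<^sup>2 * (\<Sum>h\<in>K. rvec \<beta> \<gamma> h * B (k + h)) * (\<Sum>h\<in>K. B (k + h))"
proof -
  define c where "c = cconst \<alpha> \<gamma>"
  have B_nonneg: "0 \<le> B m" for m unfolding B_def by (simp add: rvec_nonneg)
  have "0 \<le> \<mu>" using assms(4) norm_ge_zero order_trans by blast
  have sqrt_rvec_le: "sqrt (rvec \<beta> \<gamma> k) \<le> c * sqrt (rvec \<beta> \<gamma> h) * sqrt (rvec \<beta> \<gamma> (k + h))" for h
    unfolding c_def using assms(1-3) by (rule sqrt_rvec_le_shift)
  have "sqrt (rvec \<beta> \<gamma> k) * norm (\<Sum>h\<in>K. ph h * a (k + h))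
      \<le> sqrt (rvec \<beta> \<gamma> k) * (\<Sum>h\<in>K. \<mu> * norm (a (k + h)))"
    using assms(4)
    by (intro mult_left_mono order_trans[OF norm_sum sum_mono]) (auto simp: norm_mult mult_right_mono rvec_nonneg)
  also have "\<dots> \<le> \<mu> * c * (\<Sum>h\<in>K. sqrt (rvec \<beta> \<gamma> h) * B (k + h))"
  proof -
    have "sqrt (rvec \<beta> \<gamma> k) * (\<mu> * norm (a (k + h)))
        \<le> \<mu> * c * (sqrt (rvec \<beta> \<gamma> h) * B (k + h))" for h
      using mult_right_mono[OF sqrt_rvec_le[of h], of "\<mu> * norm (a (k + h))"] \<open>0 \<le> \<mu>\<close>
      unfolding B_def by (simp add: mult_ac)
    then show ?thesis unfolding sum_distrib_left by (rule sum_mono)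
  qed
  finally have sqrt_bound: "sqrt (rvec \<beta> \<gamma> k) * norm (\<Sum>h\<in>K. ph h * a (k + h))
      \<le> \<mu> * c * (\<Sum>h\<in>K. sqrt (rvec \<beta> \<gamma> h) * B (k + h))" .
  have "rvec \<beta> \<gamma> k * (norm (\<Sum>h\<in>K. ph h * a (k + h)))\<^sup>2
      = (sqrt (rvec \<beta> \<gamma> k) * norm (\<Sum>h\<in>K. ph h * a (k + h)))\<^sup>2"
    by (simp add: power_mult_distrib rvec_nonneg)
  also have "\<dots> \<le> (\<mu> * c * (\<Sum>h\<in>K. sqrt (rvec \<beta> \<gamma> h) * B (k + h)))\<^sup>2"
    using sqrt_bound by (intro power_mono) (auto simp: rvec_nonneg)
  also have "\<dots> = (\<mu> * c * (\<Sum>h\<in>K. sqrt (rvec \<beta> \<gamma> h) * sqrt (B (k + h)) * sqrt (B (k + h))))\<^sup>2"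
    using B_nonneg by (simp add: mult.assoc)
  also have "\<dots> = \<mu>\<^sup>2 * c\<^sup>2 * (\<Sum>h\<in>K. (sqrt (rvec \<beta> \<gamma> h) * sqrt (B (k + h))) * sqrt (B (k + h)))\<^sup>2"
    by (simp only: power_mult_distrib)
  also have "\<dots> \<le> \<mu>\<^sup>2 * c\<^sup>2 * ((\<Sum>h\<in>K. (sqrt (rvec \<beta> \<gamma> h) * sqrt (B (k + h)))\<^sup>2)
      * (\<Sum>h\<in>K. (sqrt (B (k + h)))\<^sup>2))"
    by (intro mult_left_mono Cauchy_Schwarz_ineq_sum) auto
  also have "\<dots> = \<mu>\<^sup>2 * c\<^sup>2 * (\<Sum>h\<in>K. rvec \<beta> \<gamma> h * B (k + h)) * (\<Sum>h\<in>K. B (k + h))"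
    using B_nonneg by (simp add: power_mult_distrib rvec_nonneg)
  finally show ?thesis unfolding c_def .
qed

lemma summable_on_sqrt_rvec_mult_norm:
  fixes a :: "int^'d::finite \<Rightarrow> complex" and \<gamma> :: "real^'d"
  assumes "\<forall>j. 0 < \<gamma> $ j" "0 \<le> \<beta>" "\<beta> \<le> \<alpha>"
    and "(\<lambda>k. sqrt (rvec \<alpha> \<gamma> k) * norm (a k)) summable_on UNIV"
  shows "(\<lambda>k. sqrt (rvec \<beta> \<gamma> k) * norm (a k)) summable_on UNIV"
  using assms(4)
proof (rule summable_on_comparison_test)
  show "sqrt (rvec \<beta> \<gamma> k) * norm (a k) \<le> sqrt (rvec \<alpha> \<gamma> k) * norm (a k)" for k
    using assms(1-3) by (intro mult_right_mono) (auto simp: rvec_mono_exponent)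
qed (simp add: rvec_nonneg)

lemma rvec_norm_sum_shift_sq_le_majorant:
  fixes a ph :: "int^'d::finite \<Rightarrow> complex" and \<gamma> :: "real^'d"
  assumes "\<forall>j. 0 < \<gamma> $ j \<and> \<gamma> $ j \<le> 1" "0 \<le> \<beta>" "\<beta> \<le> \<alpha>" "finite K"
    and "(\<lambda>k. sqrt (rvec \<alpha> \<gamma> k) * norm (a k)) summable_on UNIV"
    and "\<And>h. norm (ph h) \<le> \<mu>"
  defines "B \<equiv> \<lambda>m. sqrt (rvec \<beta> \<gamma> m) * norm (a m)"
  shows "rvec \<beta> \<gamma> k * (norm (\<Sum>h\<in>K. ph h * a (k + h)))\<^sup>2
      \<le> \<mu>\<^sup>2 * (cconst \<alpha> \<gamma>)\<^sup>2 * (\<Sum>\<^sub>\<infinity>m. B m) * (\<Sum>h\<in>K. rvec \<beta> \<gamma> h * B (k + h))"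
proof -
  have B_nonneg: "0 \<le> B m" for m unfolding B_def by (simp add: rvec_nonneg)
  have B_summable: "B summable_on UNIV"
    unfolding B_def using assms(1) by (intro summable_on_sqrt_rvec_mult_norm[OF _ assms(2,3,5)]) auto
  have "rvec \<beta> \<gamma> k * (norm (\<Sum>h\<in>K. ph h * a (k + h)))\<^sup>2
      \<le> \<mu>\<^sup>2 * (cconst \<alpha> \<gamma>)\<^sup>2 * (\<Sum>h\<in>K. rvec \<beta> \<gamma> h * B (k + h)) * (\<Sum>h\<in>K. B (k + h))"
    unfolding B_def by (rule rvec_norm_sum_shift_sq_le[OF assms(1-3)]) (rule assms(6))
  also have "\<dots> \<le> \<mu>\<^sup>2 * (cconst \<alpha> \<gamma>)\<^sup>2 * (\<Sum>h\<in>K. rvec \<beta> \<gamma> h * B (k + h)) * (\<Sum>\<^sub>\<infinity>m. B m)"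
    using B_nonneg sum_shift_le_infsum[OF B_summable B_nonneg assms(4)]
    by (intro mult_left_mono sum_nonneg mult_nonneg_nonneg) (auto simp: rvec_nonneg)
  finally show ?thesis by (simp add: mult_ac)
qed

lemma has_sum_rvec_norm_sum_shift_sq_majorant:
  fixes a ph :: "int^'d::finite \<Rightarrow> complex" and \<gamma> :: "real^'d"
  assumes "\<forall>j. 0 < \<gamma> $ j \<and> \<gamma> $ j \<le> 1" "0 \<le> \<beta>" "\<beta> \<le> \<alpha>" "finite K"
    and "(\<lambda>k. sqrt (rvec \<alpha> \<gamma> k) * norm (a k)) summable_on UNIV"
    and "\<And>h. norm (ph h) \<le> \<mu>"
  obtains M where "(M has_sum (\<mu>\<^sup>2 * (cconst \<alpha> \<gamma>)\<^sup>2 * (\<Sum>\<^sub>\<infinity>m. sqrt (rvec \<beta> \<gamma> m) * norm (a m))\<^sup>2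
      * (\<Sum>h\<in>K. rvec \<beta> \<gamma> h))) UNIV"
    and "\<And>k. rvec \<beta> \<gamma> k * (norm (\<Sum>h\<in>K. ph h * a (k + h)))\<^sup>2 \<le> M k"
proof -
  define B where "B = (\<lambda>m. sqrt (rvec \<beta> \<gamma> m) * norm (a m))"
  define C where "C = \<mu>\<^sup>2 * (cconst \<alpha> \<gamma>)\<^sup>2 * (\<Sum>\<^sub>\<infinity>m. B m)"
  have B_summable: "B summable_on UNIV"
    unfolding B_def using assms(1) by (intro summable_on_sqrt_rvec_mult_norm[OF _ assms(2,3,5)]) auto
  show ?thesis
  proof (rule that[of "\<lambda>k. C * (\<Sum>h\<in>K. rvec \<beta> \<gamma> h * B (k + h))"])
    have eq: "C * ((\<Sum>h\<in>K. rvec \<beta> \<gamma> h) * (\<Sum>\<^sub>\<infinity>m. B m))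
        = \<mu>\<^sup>2 * (cconst \<alpha> \<gamma>)\<^sup>2 * (\<Sum>\<^sub>\<infinity>m. B m)\<^sup>2 * (\<Sum>h\<in>K. rvec \<beta> \<gamma> h)"
      unfolding C_def by (simp add: power2_eq_square mult_ac)
    have "((\<lambda>k. C * (\<Sum>h\<in>K. rvec \<beta> \<gamma> h * B (k + h)))
        has_sum (C * ((\<Sum>h\<in>K. rvec \<beta> \<gamma> h) * (\<Sum>\<^sub>\<infinity>m. B m)))) UNIV"
      using B_summable assms(4) by (intro has_sum_cmult_right has_sum_sum_shift)
    then show "((\<lambda>k. C * (\<Sum>h\<in>K. rvec \<beta> \<gamma> h * B (k + h))) has_sum
        (\<mu>\<^sup>2 * (cconst \<alpha> \<gamma>)\<^sup>2 * (\<Sum>\<^sub>\<infinity>m. sqrt (rvec \<beta> \<gamma> m) * norm (a m))\<^sup>2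
          * (\<Sum>h\<in>K. rvec \<beta> \<gamma> h))) UNIV"
      unfolding eq unfolding B_def .
    show "rvec \<beta> \<gamma> k * (norm (\<Sum>h\<in>K. ph h * a (k + h)))\<^sup>2
        \<le> C * (\<Sum>h\<in>K. rvec \<beta> \<gamma> h * B (k + h))" for k
      using rvec_norm_sum_shift_sq_le_majorant[where a=a and ph=ph, OF assms]
      unfolding C_def B_def .
  qed
qed

lemma rvec_norm_sum_shift_sq_summable_le:
  fixes a ph :: "int^'d::finite \<Rightarrow> complex" and \<gamma> :: "real^'d"
  assumes "\<forall>j. 0 < \<gamma> $ j \<and> \<gamma> $ j \<le> 1" "0 \<le> \<beta>" "\<beta> \<le> \<alpha>" "finite K"
    and "(\<lambda>k. sqrt (rvec \<alpha> \<gamma> k) * norm (a k)) summable_on UNIV"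
    and "\<And>h. norm (ph h) \<le> \<mu>"
  shows "(\<lambda>k. rvec \<beta> \<gamma> k * (norm (\<Sum>h\<in>K. ph h * a (k + h)))\<^sup>2) summable_on UNIV"
    and "(\<Sum>\<^sub>\<infinity>k. rvec \<beta> \<gamma> k * (norm (\<Sum>h\<in>K. ph h * a (k + h)))\<^sup>2)
      \<le> \<mu>\<^sup>2 * (cconst \<alpha> \<gamma>)\<^sup>2 * (\<Sum>\<^sub>\<infinity>k. sqrt (rvec \<alpha> \<gamma> k) * norm (a k))\<^sup>2
        * (\<Sum>h\<in>K. rvec \<beta> \<gamma> h)"
proof -
  obtain M where M: "(M has_sum (\<mu>\<^sup>2 * (cconst \<alpha> \<gamma>)\<^sup>2
      * (\<Sum>\<^sub>\<infinity>m. sqrt (rvec \<beta> \<gamma> m) * norm (a m))\<^sup>2 * (\<Sum>h\<in>K. rvec \<beta> \<gamma> h))) UNIV"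
    and le_M: "\<And>k. rvec \<beta> \<gamma> k * (norm (\<Sum>h\<in>K. ph h * a (k + h)))\<^sup>2 \<le> M k"
    using has_sum_rvec_norm_sum_shift_sq_majorant[where a=a and ph=ph, OF assms] by blast
  show summable: "(\<lambda>k. rvec \<beta> \<gamma> k * (norm (\<Sum>h\<in>K. ph h * a (k + h)))\<^sup>2) summable_on UNIV"
    using M by (rule has_sum_imp_summable[THEN summable_on_comparison_test]) (auto simp: le_M rvec_nonneg)
  have "(\<Sum>\<^sub>\<infinity>k. rvec \<beta> \<gamma> k * (norm (\<Sum>h\<in>K. ph h * a (k + h)))\<^sup>2) \<le> (\<Sum>\<^sub>\<infinity>k. M k)"
    using summable M by (intro infsum_mono le_M) (auto simp: has_sum_iff)
  also have "\<dots> = \<mu>\<^sup>2 * (cconst \<alpha> \<gamma>)\<^sup>2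
      * (\<Sum>\<^sub>\<infinity>m. sqrt (rvec \<beta> \<gamma> m) * norm (a m))\<^sup>2 * (\<Sum>h\<in>K. rvec \<beta> \<gamma> h)"
    using M by (simp add: has_sum_iff)
  also have "\<dots> \<le> \<mu>\<^sup>2 * (cconst \<alpha> \<gamma>)\<^sup>2
      * (\<Sum>\<^sub>\<infinity>k. sqrt (rvec \<alpha> \<gamma> k) * norm (a k))\<^sup>2 * (\<Sum>h\<in>K. rvec \<beta> \<gamma> h)"
  proof (intro mult_right_mono mult_left_mono power_mono infsum_nonneg sum_nonneg)
    show "(\<Sum>\<^sub>\<infinity>m. sqrt (rvec \<beta> \<gamma> m) * norm (a m)) \<le> (\<Sum>\<^sub>\<infinity>k. sqrt (rvec \<alpha> \<gamma> k) * norm (a k))"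
      using assms(1-3,5) summable_on_sqrt_rvec_mult_norm[OF _ assms(2,3,5)]
      by (intro infsum_mono mult_right_mono) (auto simp: rvec_mono_exponent)
  qed (auto simp: rvec_nonneg)
  finally show "(\<Sum>\<^sub>\<infinity>k. rvec \<beta> \<gamma> k * (norm (\<Sum>h\<in>K. ph h * a (k + h)))\<^sup>2)
      \<le> \<mu>\<^sup>2 * (cconst \<alpha> \<gamma>)\<^sup>2 * (\<Sum>\<^sub>\<infinity>k. sqrt (rvec \<alpha> \<gamma> k) * norm (a k))\<^sup>2
        * (\<Sum>h\<in>K. rvec \<beta> \<gamma> h)" .
qed

lemma integrable_norm_sq_if_bounded:
  fixes f :: "real^'d::finite \<Rightarrow> complex"
  assumes "f \<in> borel_measurable (lebesgue_on unit_cube)" "\<And>y. y \<in> unit_cube \<Longrightarrow> norm (f y) \<le> M"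
  shows "integrable (lebesgue_on unit_cube) (\<lambda>y. (norm (f y))\<^sup>2)"
proof (rule finite_measure.integrable_const_bound[OF lebesgue_on_unit_cube_finite, where B="M\<^sup>2"])
  show "AE y in lebesgue_on unit_cube. norm ((norm (f y))\<^sup>2) \<le> M\<^sup>2"
    using assms(2) by (intro AE_I2) (auto intro: power_mono)
  show "(\<lambda>y. (norm (f y))\<^sup>2) \<in> borel_measurable (lebesgue_on unit_cube)"
    using assms(1) by measurable
qed

lemma fourier_series_mult_phiK:
  fixes G :: "real^'d::finite \<Rightarrow> complex"
  assumes "in_A \<alpha> \<gamma> G" "y \<in> unit_cube" "finite K"
  shows "G y * phiK K N c x y = (\<Sum>\<^sub>\<infinity>k. fourier_coeff (\<lambda>y. G y * phiK K N c x y) k * omega k y)"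
proof -
  define a where "a = fourier_coeff G"
  define ph where "ph = phi_check N c x"
  have G_integrable: "integrable (lebesgue_on unit_cube) G" using assms(1) unfolding in_A_def by auto
  have shifted_series: "(\<lambda>k. a (k + h) * omega k y) summable_on UNIV" for h
  proof (rule abs_summable_summable)
    show "(\<lambda>k. norm (a (k + h) * omega k y)) summable_on UNIV"
      using summable_on_norm_fourier_coeff[OF assms(1)] summable_on_shift_iff[of "\<lambda>k. norm (a k)" h]
      unfolding a_def by (simp add: norm_mult)
  qed
  have shift: "(\<Sum>\<^sub>\<infinity>m. a m * omega m y) * omega (-h) y = (\<Sum>\<^sub>\<infinity>k. a (k + h) * omega k y)" for h
  proof -
    have "(\<Sum>\<^sub>\<infinity>m. a m * omega m y) * omega (-h) y = (\<Sum>\<^sub>\<infinity>m. a m * omega (m - h) y)"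
      by (subst infsum_cmult_left'[symmetric]) (simp add: omega_add[of _ "-h", symmetric] mult.assoc)
    also have "\<dots> = (\<Sum>\<^sub>\<infinity>k. a (k + h) * omega k y)"
      using infsum_shift[of "\<lambda>m. a m * omega (m - h) y" h] by simp
    finally show ?thesis .
  qed
  have "G y = (\<Sum>\<^sub>\<infinity>m. a m * omega m y)"
    using assms(1,2) unfolding in_A_def a_def by auto
  then have "G y * phiK K N c x y = (\<Sum>h\<in>K. ph h * ((\<Sum>\<^sub>\<infinity>m. a m * omega m y) * omega (-h) y))"
    unfolding phiK_def ph_def cnj_omega sum_distrib_left by (simp add: mult_ac)
  also have "\<dots> = (\<Sum>h\<in>K. ph h * (\<Sum>\<^sub>\<infinity>k. a (k + h) * omega k y))"
    by (simp only: shift)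
  also have "\<dots> = (\<Sum>\<^sub>\<infinity>k. \<Sum>h\<in>K. ph h * (a (k + h) * omega k y))"
    using assms(3) shifted_series
    by (simp add: infsum_cmult_right' infsum_sum summable_on_cmult_right)
  also have "\<dots> = (\<Sum>\<^sub>\<infinity>k. fourier_coeff (\<lambda>y. G y * phiK K N c x y) k * omega k y)"
    unfolding fourier_coeff_mult_phiK[OF G_integrable] a_def ph_def
    by (simp add: sum_distrib_right mult.assoc)
  finally show ?thesis .
qed

lemma
  fixes G :: "real^'d::finite \<Rightarrow> complex" and \<gamma> :: "real^'d"
  assumes "in_A \<alpha> \<gamma> G" "\<forall>j. 0 < \<gamma> $ j \<and> \<gamma> $ j \<le> 1" "0 \<le> \<beta>" "\<beta> \<le> \<alpha>" "finite K"
  shows in_H_mult_phiK: "in_H \<beta> \<gamma> (\<lambda>y. G y * phiK K N c x y)"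
    and H_norm_sq_mult_phiK_le: "H_norm_sq \<beta> \<gamma> (\<lambda>y. G y * phiK K N c x y)
      \<le> (mubar N c * cconst \<alpha> \<gamma> * A_norm \<alpha> \<gamma> G)\<^sup>2 * (\<Sum>h\<in>K. rvec \<beta> \<gamma> h)"
proof -
  define F where "F = (\<lambda>y. G y * phiK K N c x y)"
  have G_integrable: "integrable (lebesgue_on unit_cube) G" using assms(1) unfolding in_A_def by auto
  have coeff: "fourier_coeff F k = (\<Sum>h\<in>K. phi_check N c x h * fourier_coeff G (k + h))" for k
    unfolding F_def by (rule fourier_coeff_mult_phiK[OF G_integrable])
  have A_summable: "(\<lambda>k. sqrt (rvec \<alpha> \<gamma> k) * norm (fourier_coeff G k)) summable_on UNIV"
    using assms(1) unfolding in_A_def by auto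
  note weighted_sq = rvec_norm_sum_shift_sq_summable_le[OF assms(2-5) A_summable norm_phi_check_le]
  have measurable: "F \<in> borel_measurable (lebesgue_on unit_cube)"
    unfolding F_def
    using G_integrable borel_measurable_continuous_on_unit_cube[OF continuous_on_phiK] by measurable
  have bounded: "norm (F y) \<le> (\<Sum>\<^sub>\<infinity>k. norm (fourier_coeff G k)) * (real (card K) * mubar N c)"
    if "y \<in> unit_cube" for y
    unfolding F_def norm_mult
    using norm_le_sum_norm_fourier_coeff[OF assms(1) that] norm_phiK_le[of K N c x y]
    by (intro mult_mono) (auto intro: infsum_nonneg)
  show "in_H \<beta> \<gamma> F"
    unfolding in_H_def
  proof (intro conjI ballI)
    show "integrable (lebesgue_on unit_cube) (\<lambda>y. (norm (F y))\<^sup>2)"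
      using measurable bounded by (rule integrable_norm_sq_if_bounded)
    show "(\<lambda>k. rvec \<beta> \<gamma> k * (norm (fourier_coeff F k))\<^sup>2) summable_on UNIV"
      unfolding coeff by (rule weighted_sq(1))
    show "F y = (\<Sum>\<^sub>\<infinity>k. fourier_coeff F k * omega k y)" if "y \<in> unit_cube" for y
      unfolding F_def using assms(1) that assms(5) by (rule fourier_series_mult_phiK)
  qed (rule measurable)
  show "H_norm_sq \<beta> \<gamma> F \<le> (mubar N c * cconst \<alpha> \<gamma> * A_norm \<alpha> \<gamma> G)\<^sup>2 * (\<Sum>h\<in>K. rvec \<beta> \<gamma> h)"
    unfolding H_norm_sq_def coeff A_norm_def using weighted_sq(2)
    by (simp add: power_mult_distrib)
qed

section \<open>Worst-case error and the quadrature error\<close>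

lemma fourier_coeff_divide:
  "fourier_coeff (\<lambda>y. f y / complex_of_real r) k = fourier_coeff f k / complex_of_real r"
  unfolding fourier_coeff_def cube_integral_def by (simp add: mult.commute)

lemma H_norm_sq_nonneg: "0 \<le> H_norm_sq \<beta> \<gamma> f"
  unfolding H_norm_sq_def by (intro infsum_nonneg mult_nonneg_nonneg) (auto simp: rvec_nonneg)

lemma
  assumes "in_H \<beta> \<gamma> f"
  shows in_H_divide: "in_H \<beta> \<gamma> (\<lambda>y. f y / complex_of_real r)"
    and H_norm_sq_divide: "H_norm_sq \<beta> \<gamma> (\<lambda>y. f y / complex_of_real r) = H_norm_sq \<beta> \<gamma> f / r\<^sup>2"
proof -
  have weighted_coeff: "rvec \<beta> \<gamma> k * (norm (fourier_coeff (\<lambda>y. f y / complex_of_real r) k))\<^sup>2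
      = rvec \<beta> \<gamma> k * (norm (fourier_coeff f k))\<^sup>2 * inverse (r\<^sup>2)" for k
    unfolding fourier_coeff_divide norm_divide power_divide by (simp add: divide_inverse)
  show "H_norm_sq \<beta> \<gamma> (\<lambda>y. f y / complex_of_real r) = H_norm_sq \<beta> \<gamma> f / r\<^sup>2"
    unfolding H_norm_sq_def weighted_coeff by (simp add: infsum_cmult_left' divide_inverse)
  have "(\<lambda>y. f y / complex_of_real r) \<in> borel_measurable (lebesgue_on unit_cube)"
    using assms unfolding in_H_def by (intro borel_measurable_divide) auto
  moreover have "integrable (lebesgue_on unit_cube) (\<lambda>y. (norm (f y / complex_of_real r))\<^sup>2)"
    using assms unfolding in_H_def by (simp add: norm_divide power_divide)
  moreover have "(\<lambda>k. rvec \<beta> \<gamma> k * (norm (fourier_coeff (\<lambda>y. f y / complex_of_real r) k))\<^sup>2)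
      summable_on UNIV"
    using assms unfolding in_H_def weighted_coeff by (auto intro: summable_on_cmult_left)
  moreover have "f y / complex_of_real r
      = (\<Sum>\<^sub>\<infinity>k. fourier_coeff (\<lambda>y. f y / complex_of_real r) k * omega k y)" if "y \<in> unit_cube" for y
  proof -
    have "f y / complex_of_real r = (\<Sum>\<^sub>\<infinity>k. fourier_coeff f k * omega k y) * inverse (complex_of_real r)"
      using assms that unfolding in_H_def by (simp add: divide_inverse)
    also have "\<dots> = (\<Sum>\<^sub>\<infinity>k. fourier_coeff f k * omega k y * inverse (complex_of_real r))"
      by (rule infsum_cmult_left'[symmetric])
    finally show ?thesis
      unfolding fourier_coeff_divide by (simp add: divide_inverse mult_ac)
  qed
  ultimately show "in_H \<beta> \<gamma> (\<lambda>y. f y / complex_of_real r)"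
    unfolding in_H_def by blast
qed

text \<open>\<open>wce\<close> only controls the unit ball, hence the rescaling by \<open>r\<close>.\<close>

lemma quadrature_error_le_of_H_norm_sq_le:
  assumes "in_H \<beta> \<gamma> f" "wce \<beta> \<gamma> L z \<le> ereal W" "0 < r" "H_norm_sq \<beta> \<gamma> f \<le> r\<^sup>2"
  shows "norm (cube_integral f - (1 / of_nat L) * (\<Sum>l<L. f (z l))) \<le> r * W"
proof -
  define f' where "f' = (\<lambda>y. f y / complex_of_real r)"
  have "H_norm_sq \<beta> \<gamma> f' = H_norm_sq \<beta> \<gamma> f / r\<^sup>2"
    unfolding f'_def using assms(1) by (rule H_norm_sq_divide)
  also have "\<dots> \<le> 1"
    using assms(3,4) by simp
  finally have "f' \<in> {f. in_H \<beta> \<gamma> f \<and> H_norm_sq \<beta> \<gamma> f \<le> 1}"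
    unfolding f'_def using in_H_divide[OF assms(1)] by auto
  then have "ereal (norm (cube_integral f' - (1 / of_nat L) * (\<Sum>l<L. f' (z l)))) \<le> wce \<beta> \<gamma> L z"
    unfolding wce_def by (rule SUP_upper)
  then have "norm (cube_integral f' - (1 / of_nat L) * (\<Sum>l<L. f' (z l))) \<le> W"
    using order_trans[OF _ assms(2)] ereal_less_eq(3) by blast
  moreover have "cube_integral f' - (1 / of_nat L) * (\<Sum>l<L. f' (z l))
      = (cube_integral f - (1 / of_nat L) * (\<Sum>l<L. f (z l))) / complex_of_real r"
    unfolding f'_def cube_integral_def by (simp add: sum_divide_distrib[symmetric] diff_divide_distrib)
  ultimately show ?thesis
    using assms(3) by (simp add: norm_divide divide_le_eq mult.commute)
qed

lemma quadrature_error_le_wce: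
  assumes "in_H \<beta> \<gamma> f" "wce \<beta> \<gamma> L z \<le> ereal W" "0 \<le> W"
  shows "norm (cube_integral f - (1 / of_nat L) * (\<Sum>l<L. f (z l))) \<le> sqrt (H_norm_sq \<beta> \<gamma> f) * W"
proof (rule field_le_epsilon)
  fix e :: real
  assume "0 < e"
  define r where "r = sqrt (H_norm_sq \<beta> \<gamma> f) + e / (W + 1)"
  have "0 < e / (W + 1)" using \<open>0 < e\<close> assms(3) by simp
  then have "0 < r" "sqrt (H_norm_sq \<beta> \<gamma> f) \<le> r"
    unfolding r_def using real_sqrt_ge_zero[OF H_norm_sq_nonneg[of \<beta> \<gamma> f]] by linarith+
  then have "norm (cube_integral f - (1 / of_nat L) * (\<Sum>l<L. f (z l))) \<le> r * W"
    using assms(1,2) by (intro quadrature_error_le_of_H_norm_sq_le sqrt_le_D)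
  also have "\<dots> \<le> sqrt (H_norm_sq \<beta> \<gamma> f) * W + e / (W + 1) * (W + 1)"
    unfolding r_def distrib_right using \<open>0 < e\<close> assms(3) by (intro add_left_mono mult_left_mono) auto
  finally show "norm (cube_integral f - (1 / of_nat L) * (\<Sum>l<L. f (z l)))
      \<le> sqrt (H_norm_sq \<beta> \<gamma> f) * W + e"
    using assms(3) by simp
qed

lemma sqrt_power_eq_powr: "0 < x \<Longrightarrow> sqrt (x ^ n) = x powr (real n / 2)"
  by (simp add: powr_half_sqrt[symmetric] powr_realpow[symmetric] powr_powr)

lemma err2_le:
  fixes g :: "real^'d::finite \<Rightarrow> real" and \<gamma> :: "real^'d" and z :: "nat \<Rightarrow> real^'d"
  assumes "in_A \<alpha> \<gamma> (\<lambda>y. complex_of_real (g y))" "\<forall>j. 0 < \<gamma> $ j \<and> \<gamma> $ j \<le> 1"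
    and "0 < \<delta>" "\<delta> \<le> \<alpha> - 1/2" "1 \<le> \<nu>"
    and "wce (\<alpha> - 1/2 - \<delta>) \<gamma> L z \<le> ereal W" "0 \<le> W"
  shows "err2 g (Rect \<alpha> \<nu> \<gamma>) N c x L z
    \<le> A_norm \<alpha> \<gamma> (\<lambda>y. complex_of_real (g y)) * mubar N c * cconst \<alpha> \<gamma>
      * \<nu> powr (real CARD('d) / 2) * zeta_dd \<delta> CARD('d) * W"
proof -
  define \<beta> where "\<beta> = \<alpha> - 1/2 - \<delta>"
  define G where "G = (\<lambda>y. complex_of_real (g y))"
  define K where "K = Rect \<alpha> \<nu> \<gamma>"
  define Z where "Z = 1 + 2 * rzeta (1 + 2 * \<delta>)"
  define D where "D = mubar N c * cconst \<alpha> \<gamma> * A_norm \<alpha> \<gamma> G"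
  have \<beta>: "0 \<le> \<beta>" "\<beta> < \<alpha> - 1/2" "2 * (\<alpha> - \<beta>) = 1 + 2 * \<delta>"
    unfolding \<beta>_def using assms(3,4) by auto
  have "finite K" unfolding K_def using assms(2) \<beta> by (intro finite_Rect) auto
  have "0 < Z" unfolding Z_def using assms(3) rzeta_nonneg[of "1 + 2 * \<delta>"] by simp
  have "0 \<le> D" unfolding D_def by (intro mult_nonneg_nonneg mubar_nonneg cconst_nonneg A_norm_nonneg)
  have "H_norm_sq \<beta> \<gamma> (\<lambda>y. G y * phiK K N c x y) \<le> D\<^sup>2 * (\<Sum>h\<in>K. rvec \<beta> \<gamma> h)"
    unfolding D_def G_def using assms(1,2) \<beta> \<open>finite K\<close> by (intro H_norm_sq_mult_phiK_le) auto
  also have "\<dots> \<le> D\<^sup>2 * (\<nu> * Z) ^ CARD('d)"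
    using sum_rvec_Rect_le[OF assms(2) \<beta>(1,2) assms(5)] unfolding K_def Z_def \<beta>(3)
    by (intro mult_left_mono) auto
  finally have "sqrt (H_norm_sq \<beta> \<gamma> (\<lambda>y. G y * phiK K N c x y)) \<le> sqrt (D\<^sup>2 * (\<nu> * Z) ^ CARD('d))"
    by (rule real_sqrt_le_mono)
  also have "\<dots> = D * \<nu> powr (real CARD('d) / 2) * Z powr (real CARD('d) / 2)"
    using \<open>0 \<le> D\<close> assms(5) \<open>0 < Z\<close> by (simp add: real_sqrt_mult sqrt_power_eq_powr powr_mult)
  finally have "sqrt (H_norm_sq \<beta> \<gamma> (\<lambda>y. G y * phiK K N c x y)) * W
      \<le> D * \<nu> powr (real CARD('d) / 2) * Z powr (real CARD('d) / 2) * W"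
    using assms(7) by (rule mult_right_mono)
  moreover have "err2 g K N c x L z \<le> sqrt (H_norm_sq \<beta> \<gamma> (\<lambda>y. G y * phiK K N c x y)) * W"
    unfolding err2_def G_def using assms(1,2,6,7) \<beta> \<open>finite K\<close>
    unfolding \<beta>_def by (intro quadrature_error_le_wce in_H_mult_phiK) auto
  ultimately show ?thesis
    unfolding K_def Z_def D_def G_def zeta_dd_def by (simp add: mult_ac)
qed

lemma Cconst_nonneg: "0 \<le> Cconst \<gamma> \<beta> \<tau>"
  unfolding Cconst_def by (intro mult_nonneg_nonneg prod_nonneg) auto

lemma err2_le_of_wce_decay:
  fixes g :: "real^'d::finite \<Rightarrow> real" and \<gamma> :: "real^'d" and z :: "nat \<Rightarrow> real^'d"
  assumes "in_A \<alpha> \<gamma> (\<lambda>y. complex_of_real (g y))" "\<forall>j. 0 < \<gamma> $ j \<and> \<gamma> $ j \<le> 1"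
    and "0 < \<delta>" "\<delta> \<le> \<alpha> - 1/2" "1 \<le> \<nu>"
    and "wce (\<alpha> - 1/2 - \<delta>) \<gamma> L z
      \<le> ereal (Cconst \<gamma> (\<alpha> - 1/2 - \<delta>) \<tau> * real L powr (- (\<alpha> - 1/2 - \<delta>) + \<tau>))"
  shows "err2 g (Rect \<alpha> \<nu> \<gamma>) N c x L z
    \<le> A_norm \<alpha> \<gamma> (\<lambda>y. complex_of_real (g y))
      * (\<nu> powr (real CARD('d) / 2) / real L powr (\<alpha> - 1/2 - \<delta> - \<tau>)
         * cconst \<alpha> \<gamma> * zeta_dd \<delta> CARD('d) * Cconst \<gamma> (\<alpha> - 1/2 - \<delta>) \<tau>) * mubar N c"
proof -
  define W where "W = Cconst \<gamma> (\<alpha> - 1/2 - \<delta>) \<tau> / real L powr (\<alpha> - 1/2 - \<delta> - \<tau>)"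
  note assms(6)
  also have "- (\<alpha> - 1/2 - \<delta>) + \<tau> = - (\<alpha> - 1/2 - \<delta> - \<tau>)" by simp
  finally have "wce (\<alpha> - 1/2 - \<delta>) \<gamma> L z \<le> ereal W"
    unfolding W_def powr_minus_divide by simp
  then have "err2 g (Rect \<alpha> \<nu> \<gamma>) N c x L z
      \<le> A_norm \<alpha> \<gamma> (\<lambda>y. complex_of_real (g y)) * mubar N c * cconst \<alpha> \<gamma>
        * \<nu> powr (real CARD('d) / 2) * zeta_dd \<delta> CARD('d) * W"
    using assms(1-5) by (intro err2_le) (auto simp: W_def Cconst_nonneg)
  also have "a * m * k * p * z * (C / l) = a * (p / l * k * z * C) * m" for a m k p z C l :: real
    by (simp add: divide_inverse mult_ac)
  then have "A_norm \<alpha> \<gamma> (\<lambda>y. complex_of_real (g y)) * mubar N c * cconst \<alpha> \<gamma>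
        * \<nu> powr (real CARD('d) / 2) * zeta_dd \<delta> CARD('d) * W
      = A_norm \<alpha> \<gamma> (\<lambda>y. complex_of_real (g y))
        * (\<nu> powr (real CARD('d) / 2) / real L powr (\<alpha> - 1/2 - \<delta> - \<tau>)
           * cconst \<alpha> \<gamma> * zeta_dd \<delta> CARD('d) * Cconst \<gamma> (\<alpha> - 1/2 - \<delta>) \<tau>) * mubar N c"
    unfolding W_def .
  finally show ?thesis .
qed

theorem theorem3p13:
  fixes \<alpha> \<delta> \<tau> \<nu> :: real
    and \<gamma> :: "real^'d::{finite,linorder}"
    and g :: "real^'d::{finite,linorder} \<Rightarrow> real"
    and N :: nat and x :: "nat \<Rightarrow> real^'d::{finite,linorder}" and c :: "nat \<Rightarrow> real"
    and L :: nat and gv :: "nat^'d::{finite,linorder}"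
  assumes "\<alpha> > 1"
    and "0 < \<delta>" and "\<delta> < \<alpha> - 1"
    and "0 < \<tau>" and "\<tau> \<le> \<alpha> - 1 - \<delta>"
    and "\<forall>j. \<gamma> $ j \<le> 1 \<and> 0 < \<gamma> $ j"
    and "\<forall>i j. i \<le> j \<longrightarrow> \<gamma> $ j \<le> \<gamma> $ i"
    and "in_A \<alpha> \<gamma> (\<lambda>y. complex_of_real (g y))"
    and "\<forall>n\<in>{1..N}. x n \<in> unit_cube"
    and "prime L"
    and "\<forall>j. 1 \<le> gv $ j \<and> gv $ j \<le> L - 1"
    and "\<forall>\<tau>'. 0 < \<tau>' \<and> \<tau>' \<le> (\<alpha> - 1/2 - \<delta>) - 1/2 \<longrightarrow>
           wce (\<alpha> - 1/2 - \<delta>) \<gamma> L (lattice_pt L gv)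
             \<le> ereal (Cconst \<gamma> (\<alpha> - 1/2 - \<delta>) \<tau>' * real L powr (- (\<alpha> - 1/2 - \<delta>) + \<tau>'))"
    and "\<nu> > 1"
  shows "norm ((1 / of_nat N) * (\<Sum>n=1..N. complex_of_real (c n * g (x n)))
            - (1 / of_nat L) * (\<Sum>l<L. complex_of_real (g (lattice_pt L gv l))
                 * phiK (Rect \<alpha> \<nu> \<gamma>) N c x (lattice_pt L gv l)))
         \<le> err1 g (Rect \<alpha> \<nu> \<gamma>) N c x + err2 g (Rect \<alpha> \<nu> \<gamma>) N c x L (lattice_pt L gv)
       \<and> err1 g (Rect \<alpha> \<nu> \<gamma>) N c x + err2 g (Rect \<alpha> \<nu> \<gamma>) N c x L (lattice_pt L gv)
         \<le> A_norm \<alpha> \<gamma> (\<lambda>y. complex_of_real (g y))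
            * (1 / sqrt \<nu> + \<nu> powr (real CARD('d) / 2) / real L powr (\<alpha> - 1/2 - \<delta> - \<tau>)
               * cconst \<alpha> \<gamma> * zeta_dd \<delta> CARD('d) * Cconst \<gamma> (\<alpha> - 1/2 - \<delta>) \<tau>)
            * mubar N c"
proof
  show "norm ((1 / of_nat N) * (\<Sum>n=1..N. complex_of_real (c n * g (x n)))
            - (1 / of_nat L) * (\<Sum>l<L. complex_of_real (g (lattice_pt L gv l))
                 * phiK (Rect \<alpha> \<nu> \<gamma>) N c x (lattice_pt L gv l)))
         \<le> err1 g (Rect \<alpha> \<nu> \<gamma>) N c x + err2 g (Rect \<alpha> \<nu> \<gamma>) N c x L (lattice_pt L gv)"
    unfolding err1_def err2_def by (rule order_trans[OF _ norm_triangle_ineq]) simp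
next
  have \<gamma>: "\<forall>j. 0 < \<gamma> $ j \<and> \<gamma> $ j \<le> 1" using assms(6) by auto
  have "err1 g (Rect \<alpha> \<nu> \<gamma>) N c x
      \<le> A_norm \<alpha> \<gamma> (\<lambda>y. complex_of_real (g y)) * (1 / sqrt \<nu>) * mubar N c"
    using assms(1,8,9,13) \<gamma> by (intro err1_le finite_Rect rvec_gt_if_notin_Rect) auto
  moreover have "err2 g (Rect \<alpha> \<nu> \<gamma>) N c x L (lattice_pt L gv)
    \<le> A_norm \<alpha> \<gamma> (\<lambda>y. complex_of_real (g y))
      * (\<nu> powr (real CARD('d) / 2) / real L powr (\<alpha> - 1/2 - \<delta> - \<tau>)
         * cconst \<alpha> \<gamma> * zeta_dd \<delta> CARD('d) * Cconst \<gamma> (\<alpha> - 1/2 - \<delta>) \<tau>) * mubar N c"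
    using assms(2,3,4,5,12,13) \<gamma> by (intro err2_le_of_wce_decay[OF assms(8)]) auto
  ultimately show "err1 g (Rect \<alpha> \<nu> \<gamma>) N c x + err2 g (Rect \<alpha> \<nu> \<gamma>) N c x L (lattice_pt L gv)
         \<le> A_norm \<alpha> \<gamma> (\<lambda>y. complex_of_real (g y))
            * (1 / sqrt \<nu> + \<nu> powr (real CARD('d) / 2) / real L powr (\<alpha> - 1/2 - \<delta> - \<tau>)
               * cconst \<alpha> \<gamma> * zeta_dd \<delta> CARD('d) * Cconst \<gamma> (\<alpha> - 1/2 - \<delta>) \<tau>)
            * mubar N c"
    unfolding distrib_left distrib_right by (rule add_mono)
qed

end
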